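(* Let $N\ge1$ and let $G$ be the graph consisting of a 5-cycle $C$ together with, for each of the $\binom{5}{3}=10$ triples $S$ of cycle vertices, a set of $N$ new vertices each adjacent exactly to the three vertices of $S$ (so $n=10N+5$). Let $F$ be uniform on $[0,1]$ and $p\in(0,1)$. Then $\mathcal{N}_{p\cdot\mathbf{1}}$ contains an equilibrium with revenue $5p(1-p^{1/3})$ and an equilibrium with revenue $(N+2)p(1-p)$. Consequently, for every fixed $p\in(0,1)$ the ratio between the best and worst equilibrium revenue at price $p$ is $\Omega(n)$.
   Context: Public-goods pricing game: $n$ buyers are the vertices of an undirected graph $G=([n],E)$; $N(i)=\{j:(i,j)\in E\}$ (so $i\notin N(i)$). Values i.i.d. uniform on $[0,1]$, $F(x)=\min\{1,x\}$ for $x\ge0$, $F(\infty)=1$. An equilibrium for price vector $\mathbf{p}$ is $\mathbf{T}\in[0,\infty]^n$ (buyer $i$ purchases iff $v_i\ge T_i$) with $T_i=p_i/\prod_{j\in N(i)}F(T_j)$ for all $i$ (convention $c/0=\infty$); $\mathcal{N}_{\mathbf{p}}$ is the set of equilibria; $\mathcal{R}(\mathbf{p},\mathbf{T})=\sum_ip_i(1-F(T_i))$; $p\cdot\mathbf{1}$ is the uniform price vector. *)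

theory Defs
  imports Complex_Main "HOL-Library.Extended_Real"
begin

definition Fu :: "ereal \<Rightarrow> real" where
  "Fu t = (if t = \<infinity> then 1 else min 1 (real_of_ereal t))"

definition nbrs :: "'v set \<Rightarrow> ('v \<Rightarrow> 'v \<Rightarrow> bool) \<Rightarrow> 'v \<Rightarrow> 'v set" where
  "nbrs V E i = {j \<in> V. E i j}"

definition is_equilibrium :: "'v set \<Rightarrow> ('v \<Rightarrow> 'v \<Rightarrow> bool) \<Rightarrow> ('v \<Rightarrow> real) \<Rightarrow> ('v \<Rightarrow> ereal) \<Rightarrow> bool" where
  "is_equilibrium V E p T \<longleftrightarrow>
     (\<forall>i\<in>V. 0 \<le> T i \<and>
        T i = (let q = (\<Prod>j\<in>nbrs V E i. Fu (T j)) in if q = 0 then \<infinity> else ereal (p i / q)))"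

definition equilibria :: "'v set \<Rightarrow> ('v \<Rightarrow> 'v \<Rightarrow> bool) \<Rightarrow> ('v \<Rightarrow> real) \<Rightarrow> ('v \<Rightarrow> ereal) set" where
  "equilibria V E p = {T. is_equilibrium V E p T \<and> (\<forall>i. i \<notin> V \<longrightarrow> T i = 0)}"

definition revenue :: "'v set \<Rightarrow> ('v \<Rightarrow> real) \<Rightarrow> ('v \<Rightarrow> ereal) \<Rightarrow> real" where
  "revenue V p T = (\<Sum>i\<in>V. p i * (1 - Fu (T i)))"

text \<open>The specific graph: cycle vertices Inl 0..Inl 4 (5-cycle), and for every 3-subset S of
  {0..4} the N vertices Inr (S, j), j < N, each adjacent exactly to the vertices of S.\<close>
type_synonym gvert = "nat + (nat set \<times> nat)"

definition gV :: "nat \<Rightarrow> gvert set" where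
  "gV N = Inl ` {..<5} \<union> Inr ` ({S. S \<subseteq> {..<5} \<and> card S = 3} \<times> {..<N})"

fun gE :: "gvert \<Rightarrow> gvert \<Rightarrow> bool" where
  "gE (Inl a) (Inl b) = (b = (a + 1) mod 5 \<or> a = (b + 1) mod 5)"
| "gE (Inl a) (Inr (S, j)) = (a \<in> S)"
| "gE (Inr (S, j)) (Inl a) = (a \<in> S)"
| "gE (Inr _) (Inr _) = False"

end

theory Submission
  imports Defs
begin

text \<open>With uniform values, a buyer facing threshold \<open>T\<close> buys with probability \<open>1 - F T\<close>, so an
  equilibrium is a fixed point of purchase probabilities. If all
  cycle buyers buy with probability \<open>1 - p\<^bsup>1/3\<^esup>\<close> and nobody else buys, cycle buyers see two
  and the outer buyers three factors \<open>p\<^bsup>1/3\<^esup>\<close>, giving revenue \<open>5p(1 - p\<^bsup>1/3\<^esup>)\<close>. If the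
  buyers of an independent dominating set \<open>D\<close> buy with probability \<open>1 - p\<close> and nobody else, every
  buyer outside \<open>D\<close> has threshold at least \<open>1\<close>, giving revenue \<open>|D| p(1 - p)\<close>; the cycle
  vertices \<open>0, 2\<close> with the \<open>N\<close> buyers attached to \<open>{1, 3, 4}\<close> form such a set of size \<open>N + 2\<close>.\<close>

lemma Fu_ereal: "Fu (ereal x) = min 1 x"
  by (simp add: Fu_def)

lemma Fu_nonneg_le_one: "0 \<le> t \<Longrightarrow> 0 \<le> Fu t \<and> Fu t \<le> 1"
  by (auto simp: Fu_def real_of_ereal_pos)

lemma nbrs_subset: "nbrs V E v \<subseteq> V"
  by (auto simp: nbrs_def)

lemma equilibrium_of_fixed_point:
  assumes p_nonneg: "\<And>v. v \<in> V \<Longrightarrow> 0 \<le> p v"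
    and h_pos: "\<And>v. v \<in> V \<Longrightarrow> 0 < h v"
    and fixed: "\<And>v. v \<in> V \<Longrightarrow> Fu (ereal (p v / (\<Prod>j\<in>nbrs V E v. h j))) = h v"
  shows "\<exists>T\<in>equilibria V E p. revenue V p T = (\<Sum>v\<in>V. p v * (1 - h v))"
proof
  define T where "T v = (if v \<in> V then ereal (p v / (\<Prod>j\<in>nbrs V E v. h j)) else 0)" for v
  have Fu_T: "Fu (T v) = h v" if "v \<in> V" for v
    using fixed[OF that] that by (simp add: T_def)
  have prod_pos: "0 < (\<Prod>j\<in>nbrs V E v. h j)" for v
    using h_pos nbrs_subset[of V E v] by (intro prod_pos) auto
  have prod_Fu_T: "(\<Prod>j\<in>nbrs V E v. Fu (T j)) = (\<Prod>j\<in>nbrs V E v. h j)" for v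
    using Fu_T nbrs_subset[of V E v] by (intro prod.cong) auto
  show "T \<in> equilibria V E p"
    unfolding equilibria_def is_equilibrium_def
  proof (intro CollectI conjI ballI allI impI)
    fix i assume "i \<in> V"
    then show "0 \<le> T i"
      using prod_pos[of i] p_nonneg[of i] by (simp add: T_def)
    show "T i = (let q = \<Prod>j\<in>nbrs V E i. Fu (T j) in if q = 0 then \<infinity> else ereal (p i / q))"
      using prod_pos[of i] \<open>i \<in> V\<close> unfolding prod_Fu_T by (simp add: T_def)
  next
    fix i assume "i \<notin> V"
    then show "T i = 0" by (simp add: T_def)
  qed
  show "revenue V p T = (\<Sum>v\<in>V. p v * (1 - h v))"
    unfolding revenue_def using Fu_T by (intro sum.cong) auto
qed

text \<open>The equilibrium: buyers in \<open>C\<close> purchase with probability \<open>1 - t\<close>, all others never. A buyer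
  in \<open>C\<close> then faces threshold \<open>t ^ k / t ^ (k - 1) = t\<close>, every other buyer a threshold of at
  least \<open>1\<close>.\<close>
lemma equilibrium_of_core:
  fixes C V :: "'v set" and t :: real
  assumes "finite V" "C \<subseteq> V" "0 < t" "t < 1"
    and inside: "\<And>v. v \<in> C \<Longrightarrow> card (nbrs V E v \<inter> C) + 1 = k"
    and outside: "\<And>v. v \<in> V - C \<Longrightarrow> k \<le> card (nbrs V E v \<inter> C)"
  shows "\<exists>T\<in>equilibria V E (\<lambda>_. t ^ k). revenue V (\<lambda>_. t ^ k) T = card C * t ^ k * (1 - t)"
proof -
  define h where "h v = (if v \<in> C then t else 1)" for v
  have prod_h: "(\<Prod>j\<in>nbrs V E v. h j) = t ^ card (nbrs V E v \<inter> C)" for v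
  proof -
    have "finite (nbrs V E v)"
      using nbrs_subset \<open>finite V\<close> by (rule finite_subset)
    then show ?thesis
      by (simp add: h_def prod.If_cases)
  qed
  have fixed: "Fu (ereal (t ^ k / (\<Prod>j\<in>nbrs V E v. h j))) = h v" if "v \<in> V" for v
  proof (cases "v \<in> C")
    case True
    then have "t ^ k = t * t ^ card (nbrs V E v \<inter> C)"
      using inside by (metis add.commute power_Suc plus_1_eq_Suc)
    then show ?thesis
      using True \<open>0 < t\<close> \<open>t < 1\<close> unfolding prod_h by (simp add: h_def Fu_ereal)
  next
    case False
    then have "t ^ card (nbrs V E v \<inter> C) \<le> t ^ k"
      using that outside \<open>0 < t\<close> \<open>t < 1\<close> by (intro power_decreasing) auto
    then show ?thesis
      using False \<open>0 < t\<close> unfolding prod_h by (simp add: h_def Fu_ereal)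
  qed
  have "(\<Sum>v\<in>V. t ^ k * (1 - h v)) = (\<Sum>v\<in>C. t ^ k * (1 - t))"
    using assms(1,2) by (intro sum.mono_neutral_cong_right) (auto simp: h_def)
  also have "\<dots> = card C * t ^ k * (1 - t)"
    by simp
  finally show ?thesis
    using equilibrium_of_fixed_point[of V "\<lambda>_. t ^ k" h E] fixed \<open>0 < t\<close>
    by (auto simp: h_def)
qed

lemma revenue_bounds:
  assumes "T \<in> equilibria V E p" "\<And>v. v \<in> V \<Longrightarrow> 0 \<le> p v"
  shows "0 \<le> revenue V p T" "revenue V p T \<le> sum p V"
proof -
  have Fu_T: "0 \<le> Fu (T v) \<and> Fu (T v) \<le> 1" if "v \<in> V" for v
    using assms(1) that by (intro Fu_nonneg_le_one) (auto simp: equilibria_def is_equilibrium_def)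
  show "0 \<le> revenue V p T"
    unfolding revenue_def using Fu_T assms(2) by (intro sum_nonneg) auto
  show "revenue V p T \<le> sum p V"
    unfolding revenue_def using Fu_T assms(2) by (intro sum_mono) (auto simp: mult_left_le)
qed

lemma INF_revenue_le:
  assumes "T \<in> equilibria V E p" "\<And>v. v \<in> V \<Longrightarrow> 0 \<le> p v"
  shows "(INF T'\<in>equilibria V E p. revenue V p T') \<le> revenue V p T"
  using assms revenue_bounds(1) by (intro cINF_lower bdd_belowI2) blast+

lemma SUP_revenue_ge:
  assumes "T \<in> equilibria V E p" "\<And>v. v \<in> V \<Longrightarrow> 0 \<le> p v"
  shows "revenue V p T \<le> (SUP T'\<in>equilibria V E p. revenue V p T')"
  using assms revenue_bounds(2) by (intro cSUP_upper bdd_aboveI2) blast+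

definition triples :: "nat set set" where
  "triples = {S. S \<subseteq> {..<5} \<and> card S = 3}"

lemma gV_eq: "gV N = Inl ` {..<5} \<union> Inr ` (triples \<times> {..<N})"
  by (simp add: gV_def triples_def)

lemma finite_triples: "finite triples"
  unfolding triples_def by (rule finite_subset[of _ "Pow {..<5}"]) auto

lemma card_triples: "card triples = 10"
  unfolding triples_def by (simp add: n_subsets binomial_Suc_Suc numeral_eq_Suc)

lemma finite_gV: "finite (gV N)"
  by (simp add: gV_eq finite_triples)

lemma card_gV: "card (gV N) = 10 * N + 5"
  unfolding gV_eq using finite_triples
  by (subst card_Un_disjoint) (auto simp: card_image card_cartesian_product card_triples)

lemma Inl_in_gV [simp]: "Inl a \<in> gV N \<longleftrightarrow> a < 5"
  by (auto simp: gV_def)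

lemma Inr_in_gV [simp]: "Inr (S, j) \<in> gV N \<longleftrightarrow> S \<in> triples \<and> j < N"
  by (auto simp: gV_def triples_def)

lemma nbrs_Inl_cycle:
  "a < 5 \<Longrightarrow> nbrs (gV N) gE (Inl a) \<inter> Inl ` {..<5} = Inl ` {(a + 1) mod 5, (a + 4) mod 5}"
proof -
  assume "a < 5"
  then have "a = 0 \<or> a = 1 \<or> a = 2 \<or> a = 3 \<or> a = 4"
    by linarith
  then show ?thesis
    by (elim disjE) (auto simp: nbrs_def lessThan_nat_numeral)
qed

lemma nbrs_Inr: "S \<in> triples \<Longrightarrow> nbrs (gV N) gE (Inr (S, j)) = Inl ` S"
  by (auto simp: nbrs_def triples_def elim: gE.elims)

lemma card_nbrs_Inl_cycle: "a < 5 \<Longrightarrow> card (nbrs (gV N) gE (Inl a) \<inter> Inl ` {..<5}) = 2"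
proof -
  assume "a < 5"
  have "(a + 1) mod 5 \<noteq> (a + 4) mod 5"
    by presburger
  with \<open>a < 5\<close> show ?thesis
    by (simp add: nbrs_Inl_cycle card_image)
qed

lemma cycle_equilibrium:
  fixes p :: real
  assumes "0 < p" "p < 1"
  shows "\<exists>T\<in>equilibria (gV N) gE (\<lambda>_. p). revenue (gV N) (\<lambda>_. p) T = 5 * p * (1 - p powr (1/3))"
proof -
  define t where "t = p powr (1/3)"
  have "0 < t" "t < 1"
    using assms by (simp_all add: t_def powr01_less_one)
  have "t ^ 3 = p"
    using \<open>0 < p\<close> by (simp add: t_def powr_powr flip: powr_realpow)
  have inside: "card (nbrs (gV N) gE v \<inter> Inl ` {..<5}) + 1 = 3" if "v \<in> Inl ` {..<5}" for v
    using that card_nbrs_Inl_cycle by auto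
  have outside: "3 \<le> card (nbrs (gV N) gE v \<inter> Inl ` {..<5})" if "v \<in> gV N - Inl ` {..<5}" for v
  proof -
    from that obtain S j where "v = Inr (S, j)" "S \<in> triples"
      by (auto simp: gV_eq)
    moreover have "S \<subseteq> {..<5}" "card S = 3"
      using \<open>S \<in> triples\<close> by (auto simp: triples_def)
    ultimately show ?thesis
      by (simp add: nbrs_Inr Int_absorb2 image_mono card_image)
  qed
  have "Inl ` {..<5} \<subseteq> gV N"
    by auto
  from equilibrium_of_core[OF finite_gV this \<open>0 < t\<close> \<open>t < 1\<close> inside outside]
  show ?thesis
    unfolding t_def[symmetric] \<open>t ^ 3 = p\<close> by (simp add: card_image)
qed

definition independent_dominating :: "nat \<Rightarrow> gvert set" where
  "independent_dominating N = Inl ` {0, 2} \<union> Inr ` ({{1, 3, 4}} \<times> {..<N})"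

lemma card_independent_dominating: "card (independent_dominating N) = N + 2"
  unfolding independent_dominating_def
  by (subst card_Un_disjoint) (auto simp: card_image card_cartesian_product)

lemma triple_meets_0_or_2:
  assumes "S \<in> triples" "S \<noteq> {1, 3, 4}"
  shows "0 \<in> S \<or> 2 \<in> S"
proof (rule ccontr)
  assume "\<not> (0 \<in> S \<or> 2 \<in> S)"
  with assms(1) have "S \<subseteq> {1, 3, 4}"
    by (auto simp: triples_def lessThan_nat_numeral)
  moreover have "card S = card {1::nat, 3, 4}"
    using assms(1) by (simp add: triples_def)
  ultimately have "S = {1, 3, 4}"
    by (intro card_subset_eq) auto
  with assms(2) show False ..
qed

lemma independent_dominating_independent:
  "v \<in> independent_dominating N \<Longrightarrow> nbrs (gV N) gE v \<inter> independent_dominating N = {}"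
  by (auto simp: independent_dominating_def nbrs_def triples_def)

lemma independent_dominating_dominating:
  assumes "v \<in> gV N - independent_dominating N"
  shows "nbrs (gV N) gE v \<inter> independent_dominating N \<noteq> {}"
  using assms
proof (cases v)
  case (Inl a)
  then have "a = 1 \<or> a = 3 \<or> a = 4"
    using assms by (auto simp: independent_dominating_def)
  then have "Inl (if a = 3 then 2 else 0) \<in> nbrs (gV N) gE v \<inter> independent_dominating N"
    using Inl by (auto simp: nbrs_def independent_dominating_def)
  then show ?thesis by blast
next
  case (Inr x)
  then obtain S j where "v = Inr (S, j)" "S \<in> triples" "S \<noteq> {1, 3, 4}"
    using assms by (cases x) (auto simp: independent_dominating_def)
  then obtain c where "c \<in> S" "c = 0 \<or> c = 2"
    using triple_meets_0_or_2 by blast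
  then have "Inl c \<in> nbrs (gV N) gE v \<inter> independent_dominating N"
    using \<open>v = Inr (S, j)\<close> \<open>S \<in> triples\<close> by (auto simp: nbrs_Inr independent_dominating_def)
  then show ?thesis by blast
qed

lemma independent_dominating_equilibrium:
  fixes p :: real
  assumes "0 < p" "p < 1"
  shows "\<exists>T\<in>equilibria (gV N) gE (\<lambda>_. p). revenue (gV N) (\<lambda>_. p) T = (real N + 2) * p * (1 - p)"
proof -
  let ?D = "independent_dominating N"
  have "?D \<subseteq> gV N"
    by (auto simp: independent_dominating_def triples_def)
  have inside: "card (nbrs (gV N) gE v \<inter> ?D) + 1 = 1" if "v \<in> ?D" for v
    using independent_dominating_independent[OF that] by simp
  have outside: "1 \<le> card (nbrs (gV N) gE v \<inter> ?D)" if "v \<in> gV N - ?D" for v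
  proof -
    have "finite (nbrs (gV N) gE v)"
      using nbrs_subset finite_gV by (rule finite_subset)
    with independent_dominating_dominating[OF that] show ?thesis
      by (simp add: Suc_le_eq card_gt_0_iff)
  qed
  from equilibrium_of_core[OF finite_gV \<open>?D \<subseteq> gV N\<close> assms inside outside]
  show ?thesis
    by (simp add: card_independent_dominating algebra_simps)
qed

lemma best_revenue_ge_linear_times_worst:
  fixes p :: real
  assumes "0 < p" "p < 1" "1 \<le> N"
  defines "c \<equiv> p * (1 - p) / (15 * (5 * p * (1 - p powr (1/3))))"
  shows "c * real (card (gV N)) * (INF T\<in>equilibria (gV N) gE (\<lambda>_. p). revenue (gV N) (\<lambda>_. p) T)
           \<le> (SUP T\<in>equilibria (gV N) gE (\<lambda>_. p). revenue (gV N) (\<lambda>_. p) T)"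
proof -
  let ?R = "revenue (gV N) (\<lambda>_. p)" and ?Q = "equilibria (gV N) gE (\<lambda>_. p)"
  define A where "A = 5 * p * (1 - p powr (1/3))"
  have c_eq: "c = p * (1 - p) / (15 * A)"
    by (simp add: c_def A_def)
  have "0 < A"
    using assms(1,2) by (simp add: A_def powr01_less_one)
  then have "0 < c"
    using assms(1,2) by (simp add: c_eq)
  obtain T1 where "T1 \<in> ?Q" "?R T1 = A"
    using cycle_equilibrium[OF assms(1,2)] unfolding A_def by blast
  obtain T2 where "T2 \<in> ?Q" "?R T2 = (real N + 2) * p * (1 - p)"
    using independent_dominating_equilibrium[OF assms(1,2)] by blast
  have "(INF T\<in>?Q. ?R T) \<le> A"
    using INF_revenue_le[OF \<open>T1 \<in> ?Q\<close>] \<open>?R T1 = A\<close> \<open>0 < p\<close> by simp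
  then have "c * real (card (gV N)) * (INF T\<in>?Q. ?R T) \<le> c * real (card (gV N)) * A"
    using \<open>0 < c\<close> by (intro mult_left_mono) auto
  also have "\<dots> \<le> c * (15 * real N) * A"
    using \<open>0 < c\<close> \<open>0 < A\<close> \<open>1 \<le> N\<close> by (simp add: card_gV)
  also have "\<dots> \<le> (real N + 2) * p * (1 - p)"
    using \<open>0 < A\<close> assms(1,2) by (simp add: c_eq)
  also have "\<dots> \<le> (SUP T\<in>?Q. ?R T)"
    using SUP_revenue_ge[OF \<open>T2 \<in> ?Q\<close>] \<open>?R T2 = _\<close> \<open>0 < p\<close> by simp
  finally show ?thesis .
qed

theorem mainTheorem16:
  fixes p :: real
  assumes "0 < p" and "p < 1"
  shows "(\<forall>N::nat. N \<ge> 1 \<longrightarrow>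
           (\<exists>T\<in>equilibria (gV N) gE (\<lambda>_. p).
               revenue (gV N) (\<lambda>_. p) T = 5 * p * (1 - p powr (1/3))) \<and>
           (\<exists>T\<in>equilibria (gV N) gE (\<lambda>_. p).
               revenue (gV N) (\<lambda>_. p) T = (real N + 2) * p * (1 - p)))
       \<and> (\<exists>c>0. \<forall>N::nat. N \<ge> 1 \<longrightarrow>
           (SUP T\<in>equilibria (gV N) gE (\<lambda>_. p). revenue (gV N) (\<lambda>_. p) T)
             \<ge> c * real (card (gV N)) *
               (INF T\<in>equilibria (gV N) gE (\<lambda>_. p). revenue (gV N) (\<lambda>_. p) T))"
proof -
  have "0 < p * (1 - p) / (15 * (5 * p * (1 - p powr (1/3))))"
    using assms by (simp add: powr01_less_one)
  then show ?thesis
    using cycle_equilibrium[OF assms] independent_dominating_equilibrium[OF assms]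
      best_revenue_ge_linear_times_worst[OF assms] by blast
qed

end
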